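(* Let $L$ be an IL-algebra and $F$ a distributive filter of $L$. Then the lattice $L/F$ (with $[x]\cup[y]=[x\cup y]$, $[x]\cap[y]=[x\cap y]$) is distributive.
   Context: An IL-algebra is a structure $(L,\cup,\cap,\bot,\to,\ast,1)$ such that $(L,\cup,\cap,\bot)$ is a lattice with least element $\bot$, $(L,\ast,1)$ is a commutative monoid with unit $1$, and for all $x,y,z\in L$: $x\ast y\leq z$ iff $x\leq y\to z$. A filter of $L$ is a non-empty $F\subseteq L$ with $1\in F$, such that $x,y\in F$ implies $x\ast y\in F$ and $x\cap y\in F$, and $x\in F$, $x\leq y$ implies $y\in F$. A filter $F$ is distributive if $((x\cup y)\cap(x\cup z))\to(x\cup(y\cap z))\in F$ for all $x,y,z\in L$. For a filter $F$, $x\,\rho_F\,y$ iff $x\to y\in F$ and $y\to x\in F$; $[x]$ is the $\rho_F$-class of $x$ and $L/F=\{[x]:x\in L\}$, with the operations on classes well defined. *)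

theory Defs
  imports Main
begin

definition IL_algebra ::
  "'a set \<Rightarrow> ('a \<Rightarrow> 'a \<Rightarrow> 'a) \<Rightarrow> ('a \<Rightarrow> 'a \<Rightarrow> 'a) \<Rightarrow> 'a \<Rightarrow>
   ('a \<Rightarrow> 'a \<Rightarrow> 'a) \<Rightarrow> ('a \<Rightarrow> 'a \<Rightarrow> 'a) \<Rightarrow> 'a \<Rightarrow> bool" where
  "IL_algebra L jn mt bt imp mult e \<longleftrightarrow>
     bt \<in> L \<and> e \<in> L \<and>
     (\<forall>x\<in>L. \<forall>y\<in>L. jn x y \<in> L \<and> mt x y \<in> L \<and> imp x y \<in> L \<and> mult x y \<in> L) \<and>
     (\<forall>x\<in>L. \<forall>y\<in>L. jn x y = jn y x \<and> mt x y = mt y x) \<and>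
     (\<forall>x\<in>L. \<forall>y\<in>L. \<forall>z\<in>L. jn (jn x y) z = jn x (jn y z)
                        \<and> mt (mt x y) z = mt x (mt y z)) \<and>
     (\<forall>x\<in>L. \<forall>y\<in>L. jn x (mt x y) = x \<and> mt x (jn x y) = x) \<and>
     (\<forall>x\<in>L. mt bt x = bt) \<and>
     (\<forall>x\<in>L. \<forall>y\<in>L. \<forall>z\<in>L. mult (mult x y) z = mult x (mult y z)) \<and>
     (\<forall>x\<in>L. \<forall>y\<in>L. mult x y = mult y x) \<and>
     (\<forall>x\<in>L. mult x e = x) \<and>
     (\<forall>x\<in>L. \<forall>y\<in>L. \<forall>z\<in>L. mt (mult x y) z = mult x y \<longleftrightarrow> mt x (imp y z) = x)"

definition lat_le :: "('a \<Rightarrow> 'a \<Rightarrow> 'a) \<Rightarrow> 'a \<Rightarrow> 'a \<Rightarrow> bool" where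
  "lat_le mt x y \<longleftrightarrow> mt x y = x"

definition IL_filter ::
  "'a set \<Rightarrow> ('a \<Rightarrow> 'a \<Rightarrow> 'a) \<Rightarrow> ('a \<Rightarrow> 'a \<Rightarrow> 'a) \<Rightarrow> 'a \<Rightarrow> 'a set \<Rightarrow> bool" where
  "IL_filter L mt mult e F \<longleftrightarrow>
     F \<subseteq> L \<and> F \<noteq> {} \<and> e \<in> F \<and>
     (\<forall>x\<in>F. \<forall>y\<in>F. mult x y \<in> F \<and> mt x y \<in> F) \<and>
     (\<forall>x\<in>F. \<forall>y\<in>L. lat_le mt x y \<longrightarrow> y \<in> F)"

definition distributive_filter ::
  "'a set \<Rightarrow> ('a \<Rightarrow> 'a \<Rightarrow> 'a) \<Rightarrow> ('a \<Rightarrow> 'a \<Rightarrow> 'a) \<Rightarrow> ('a \<Rightarrow> 'a \<Rightarrow> 'a) \<Rightarrow>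
   ('a \<Rightarrow> 'a \<Rightarrow> 'a) \<Rightarrow> 'a \<Rightarrow> 'a set \<Rightarrow> bool" where
  "distributive_filter L jn mt imp mult e F \<longleftrightarrow>
     IL_filter L mt mult e F \<and>
     (\<forall>x\<in>L. \<forall>y\<in>L. \<forall>z\<in>L.
        imp (mt (jn x y) (jn x z)) (jn x (mt y z)) \<in> F)"

definition rho :: "('a \<Rightarrow> 'a \<Rightarrow> 'a) \<Rightarrow> 'a set \<Rightarrow> 'a \<Rightarrow> 'a \<Rightarrow> bool" where
  "rho imp F x y \<longleftrightarrow> imp x y \<in> F \<and> imp y x \<in> F"

definition cls :: "'a set \<Rightarrow> ('a \<Rightarrow> 'a \<Rightarrow> 'a) \<Rightarrow> 'a set \<Rightarrow> 'a \<Rightarrow> 'a set" where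
  "cls L imp F x = {y \<in> L. rho imp F x y}"

definition quot :: "'a set \<Rightarrow> ('a \<Rightarrow> 'a \<Rightarrow> 'a) \<Rightarrow> 'a set \<Rightarrow> 'a set set" where
  "quot L imp F = cls L imp F ` L"

definition qop :: "'a set \<Rightarrow> ('a \<Rightarrow> 'a \<Rightarrow> 'a) \<Rightarrow> 'a set \<Rightarrow> ('a \<Rightarrow> 'a \<Rightarrow> 'a) \<Rightarrow>
    'a set \<Rightarrow> 'a set \<Rightarrow> 'a set" where
  "qop L imp F op A B = cls L imp F (op (SOME a. a \<in> A) (SOME b. b \<in> B))"

end

theory Submission
  imports Defs
begin

text \<open>
  The relation \<open>\<rho>\<^sub>F\<close> is a congruence for meet and join because
  \<open>(x \<rightarrow> y) \<sqinter> (z \<rightarrow> w) \<le> (x \<sqinter> z) \<rightarrow> (y \<sqinter> w)\<close> and likewise for joins, so that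
  \<open>L/F\<close> is a lattice whose operations are computed on representatives.
  In every lattice \<open>x \<squnion> (y \<sqinter> z) \<le> (x \<squnion> y) \<sqinter> (x \<squnion> z)\<close>, so distributivity of \<open>F\<close>
  says precisely that \<open>[x \<squnion> (y \<sqinter> z)] = [(x \<squnion> y) \<sqinter> (x \<squnion> z)]\<close>. The dual law
  then follows by the usual lattice-theoretic derivation, carried out modulo \<open>\<rho>\<^sub>F\<close>.
\<close>

locale il_algebra =
  fixes L :: "'a set"
    and jn :: "'a \<Rightarrow> 'a \<Rightarrow> 'a" (infixl \<open>\<squnion>\<close> 65)
    and mt :: "'a \<Rightarrow> 'a \<Rightarrow> 'a" (infixl \<open>\<sqinter>\<close> 70)
    and bt :: 'a
    and imp :: "'a \<Rightarrow> 'a \<Rightarrow> 'a" (infixr \<open>\<rightarrow>\<close> 60)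
    and mult :: "'a \<Rightarrow> 'a \<Rightarrow> 'a" (infixl \<open>\<odot>\<close> 70)
    and e :: 'a
  assumes IL_algebra: "IL_algebra L jn mt bt imp mult e"
begin

abbreviation le :: "'a \<Rightarrow> 'a \<Rightarrow> bool" (infix \<open>\<sqsubseteq>\<close> 50)
  where "x \<sqsubseteq> y \<equiv> lat_le mt x y"

lemma jn_closed [simp]: "x \<in> L \<Longrightarrow> y \<in> L \<Longrightarrow> x \<squnion> y \<in> L"
  and mt_closed [simp]: "x \<in> L \<Longrightarrow> y \<in> L \<Longrightarrow> x \<sqinter> y \<in> L"
  and imp_closed [simp]: "x \<in> L \<Longrightarrow> y \<in> L \<Longrightarrow> x \<rightarrow> y \<in> L"
  and mult_closed [simp]: "x \<in> L \<Longrightarrow> y \<in> L \<Longrightarrow> x \<odot> y \<in> L"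
  and unit_closed [simp]: "e \<in> L"
  using IL_algebra unfolding IL_algebra_def by blast+

lemma jn_commute: "x \<in> L \<Longrightarrow> y \<in> L \<Longrightarrow> x \<squnion> y = y \<squnion> x"
  and mt_commute: "x \<in> L \<Longrightarrow> y \<in> L \<Longrightarrow> x \<sqinter> y = y \<sqinter> x"
  and jn_assoc: "x \<in> L \<Longrightarrow> y \<in> L \<Longrightarrow> z \<in> L \<Longrightarrow> x \<squnion> y \<squnion> z = x \<squnion> (y \<squnion> z)"
  and mt_assoc: "x \<in> L \<Longrightarrow> y \<in> L \<Longrightarrow> z \<in> L \<Longrightarrow> x \<sqinter> y \<sqinter> z = x \<sqinter> (y \<sqinter> z)"
  and jn_mt_absorb: "x \<in> L \<Longrightarrow> y \<in> L \<Longrightarrow> x \<squnion> (x \<sqinter> y) = x"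
  and mt_jn_absorb: "x \<in> L \<Longrightarrow> y \<in> L \<Longrightarrow> x \<sqinter> (x \<squnion> y) = x"
  and mult_assoc: "x \<in> L \<Longrightarrow> y \<in> L \<Longrightarrow> z \<in> L \<Longrightarrow> x \<odot> y \<odot> z = x \<odot> (y \<odot> z)"
  and mult_commute: "x \<in> L \<Longrightarrow> y \<in> L \<Longrightarrow> x \<odot> y = y \<odot> x"
  and mult_unit: "x \<in> L \<Longrightarrow> x \<odot> e = x"
  and residuation: "x \<in> L \<Longrightarrow> y \<in> L \<Longrightarrow> z \<in> L \<Longrightarrow> x \<odot> y \<sqsubseteq> z \<longleftrightarrow> x \<sqsubseteq> y \<rightarrow> z"
  using IL_algebra unfolding IL_algebra_def lat_le_def by blast+

lemma mt_idem: "x \<in> L \<Longrightarrow> x \<sqinter> x = x"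
  by (metis jn_mt_absorb mt_jn_absorb mt_closed)

lemma le_refl: "x \<in> L \<Longrightarrow> x \<sqsubseteq> x"
  by (simp add: lat_le_def mt_idem)

lemma le_trans: "x \<in> L \<Longrightarrow> y \<in> L \<Longrightarrow> z \<in> L \<Longrightarrow> x \<sqsubseteq> y \<Longrightarrow> y \<sqsubseteq> z \<Longrightarrow> x \<sqsubseteq> z"
  unfolding lat_le_def by (metis mt_assoc)

lemma le_iff_jn_eq: "x \<in> L \<Longrightarrow> y \<in> L \<Longrightarrow> x \<sqsubseteq> y \<longleftrightarrow> x \<squnion> y = y"
  unfolding lat_le_def by (metis jn_mt_absorb mt_jn_absorb jn_commute mt_commute)

lemma mt_lower1: "x \<in> L \<Longrightarrow> y \<in> L \<Longrightarrow> x \<sqinter> y \<sqsubseteq> x"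
  unfolding lat_le_def by (metis mt_assoc mt_commute mt_idem)

lemma mt_lower2: "x \<in> L \<Longrightarrow> y \<in> L \<Longrightarrow> x \<sqinter> y \<sqsubseteq> y"
  unfolding lat_le_def by (metis mt_assoc mt_idem)

lemma mt_greatest: "x \<in> L \<Longrightarrow> y \<in> L \<Longrightarrow> z \<in> L \<Longrightarrow> z \<sqsubseteq> x \<Longrightarrow> z \<sqsubseteq> y \<Longrightarrow> z \<sqsubseteq> x \<sqinter> y"
  unfolding lat_le_def by (metis mt_assoc)

lemma jn_upper1: "x \<in> L \<Longrightarrow> y \<in> L \<Longrightarrow> x \<sqsubseteq> x \<squnion> y"
  unfolding lat_le_def by (simp add: mt_jn_absorb)

lemma jn_upper2: "x \<in> L \<Longrightarrow> y \<in> L \<Longrightarrow> y \<sqsubseteq> x \<squnion> y"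
  using jn_upper1 jn_commute by metis

lemma jn_least: "x \<in> L \<Longrightarrow> y \<in> L \<Longrightarrow> z \<in> L \<Longrightarrow> x \<sqsubseteq> z \<Longrightarrow> y \<sqsubseteq> z \<Longrightarrow> x \<squnion> y \<sqsubseteq> z"
  by (metis jn_closed jn_assoc le_iff_jn_eq)

lemma jn_mt_le_mt_jn:
  assumes "x \<in> L" "y \<in> L" "z \<in> L"
  shows "x \<squnion> (y \<sqinter> z) \<sqsubseteq> (x \<squnion> y) \<sqinter> (x \<squnion> z)"
  using assms
  by (intro mt_greatest jn_least)
    (auto intro: jn_upper1 le_trans[OF _ _ _ mt_lower1 jn_upper2] le_trans[OF _ _ _ mt_lower2 jn_upper2])

lemma le_imp_commute: "x \<in> L \<Longrightarrow> y \<in> L \<Longrightarrow> z \<in> L \<Longrightarrow> x \<sqsubseteq> y \<rightarrow> z \<longleftrightarrow> y \<sqsubseteq> x \<rightarrow> z"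
  by (metis residuation mult_commute)

lemma mult_mono_right:
  assumes "x \<in> L" "y \<in> L" "z \<in> L" "x \<sqsubseteq> y"
  shows "z \<odot> x \<sqsubseteq> z \<odot> y"
proof -
  have "y \<sqsubseteq> z \<rightarrow> z \<odot> y"
    using assms le_refl[of "z \<odot> y"] by (simp add: residuation flip: le_imp_commute)
  then have "x \<sqsubseteq> z \<rightarrow> z \<odot> y"
    using assms le_trans by (meson imp_closed mult_closed)
  then show ?thesis
    using assms by (simp add: residuation le_imp_commute)
qed

lemma mult_le_if_le_imp:
  assumes "f \<in> L" "x \<in> L" "y \<in> L" "x' \<in> L" "f \<sqsubseteq> x \<rightarrow> y" "x' \<sqsubseteq> x"
  shows "f \<odot> x' \<sqsubseteq> y"
proof -
  have "f \<odot> x' \<sqsubseteq> f \<odot> x" using assms by (simp add: mult_mono_right)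
  moreover have "f \<odot> x \<sqsubseteq> y" using assms by (simp add: residuation)
  ultimately show ?thesis using assms by (meson le_trans mult_closed)
qed

lemma unit_le_imp: "x \<in> L \<Longrightarrow> y \<in> L \<Longrightarrow> x \<sqsubseteq> y \<Longrightarrow> e \<sqsubseteq> x \<rightarrow> y"
  by (metis le_imp_commute mult_commute mult_unit residuation unit_closed)

lemma imp_compose_le:
  assumes "x \<in> L" "y \<in> L" "z \<in> L"
  shows "(y \<rightarrow> z) \<odot> (x \<rightarrow> y) \<sqsubseteq> x \<rightarrow> z"
proof -
  have "(x \<rightarrow> y) \<odot> x \<sqsubseteq> y" using assms by (simp add: residuation le_refl)
  then have "(y \<rightarrow> z) \<odot> ((x \<rightarrow> y) \<odot> x) \<sqsubseteq> z"
    using assms by (intro mult_le_if_le_imp[of _ y z]) (simp_all add: le_refl)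
  then have "(y \<rightarrow> z) \<odot> (x \<rightarrow> y) \<odot> x \<sqsubseteq> z" using assms by (simp add: mult_assoc)
  then show ?thesis using assms by (simp add: residuation)
qed

lemma mt_imp_le_imp_mt:
  assumes "x \<in> L" "y \<in> L" "z \<in> L" "w \<in> L"
  shows "(x \<rightarrow> y) \<sqinter> (z \<rightarrow> w) \<sqsubseteq> x \<sqinter> z \<rightarrow> y \<sqinter> w"
proof -
  let ?f = "(x \<rightarrow> y) \<sqinter> (z \<rightarrow> w)"
  have "?f \<odot> (x \<sqinter> z) \<sqsubseteq> y"
    using assms by (intro mult_le_if_le_imp[of _ x y]) (simp_all add: mt_lower1)
  moreover have "?f \<odot> (x \<sqinter> z) \<sqsubseteq> w"
    using assms by (intro mult_le_if_le_imp[of _ z w]) (simp_all add: mt_lower2)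
  ultimately
  have "?f \<odot> (x \<sqinter> z) \<sqsubseteq> y \<sqinter> w" using assms by (simp add: mt_greatest)
  then show ?thesis using assms by (simp add: residuation)
qed

lemma mt_imp_le_imp_jn:
  assumes "x \<in> L" "y \<in> L" "z \<in> L" "w \<in> L"
  shows "(x \<rightarrow> y) \<sqinter> (z \<rightarrow> w) \<sqsubseteq> x \<squnion> z \<rightarrow> y \<squnion> w"
proof -
  let ?f = "(x \<rightarrow> y) \<sqinter> (z \<rightarrow> w)"
  have "?f \<odot> x \<sqsubseteq> y" "?f \<odot> z \<sqsubseteq> w"
    using assms
    by (auto intro!: mult_le_if_le_imp[of _ x y] mult_le_if_le_imp[of _ z w] mt_lower1 mt_lower2 le_refl)
  then have "?f \<odot> x \<sqsubseteq> y \<squnion> w" "?f \<odot> z \<sqsubseteq> y \<squnion> w"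
    using assms by (meson jn_upper1 jn_upper2 le_trans jn_closed mult_closed mt_closed imp_closed)+
  then have "x \<sqsubseteq> ?f \<rightarrow> y \<squnion> w" "z \<sqsubseteq> ?f \<rightarrow> y \<squnion> w"
    using assms by (simp_all add: residuation le_imp_commute)
  then have "x \<squnion> z \<sqsubseteq> ?f \<rightarrow> y \<squnion> w" using assms by (simp add: jn_least)
  then show ?thesis using assms by (simp add: le_imp_commute)
qed

end

locale il_filter = il_algebra +
  fixes F :: "'a set"
  assumes IL_filter: "IL_filter L mt mult e F"
begin

lemma unit_in_filter: "e \<in> F"
  and filter_mult_closed: "x \<in> F \<Longrightarrow> y \<in> F \<Longrightarrow> x \<odot> y \<in> F"
  and filter_mt_closed: "x \<in> F \<Longrightarrow> y \<in> F \<Longrightarrow> x \<sqinter> y \<in> F"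
  and filter_upward_closed: "x \<in> F \<Longrightarrow> y \<in> L \<Longrightarrow> x \<sqsubseteq> y \<Longrightarrow> y \<in> F"
  using IL_filter unfolding IL_filter_def by blast+

lemma imp_in_filter_if_le: "x \<in> L \<Longrightarrow> y \<in> L \<Longrightarrow> x \<sqsubseteq> y \<Longrightarrow> x \<rightarrow> y \<in> F"
  by (meson filter_upward_closed imp_closed unit_in_filter unit_le_imp)

lemma imp_trans_in_filter:
  assumes "x \<in> L" "y \<in> L" "z \<in> L" "x \<rightarrow> y \<in> F" "y \<rightarrow> z \<in> F"
  shows "x \<rightarrow> z \<in> F"
  using filter_upward_closed[OF filter_mult_closed[OF assms(5,4)] _ imp_compose_le] assms by simp

lemma imp_mt_in_filter:
  assumes "x \<in> L" "y \<in> L" "z \<in> L" "w \<in> L" "x \<rightarrow> y \<in> F" "z \<rightarrow> w \<in> F"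
  shows "x \<sqinter> z \<rightarrow> y \<sqinter> w \<in> F"
  using filter_upward_closed[OF filter_mt_closed[OF assms(5,6)] _ mt_imp_le_imp_mt] assms by simp

lemma imp_jn_in_filter:
  assumes "x \<in> L" "y \<in> L" "z \<in> L" "w \<in> L" "x \<rightarrow> y \<in> F" "z \<rightarrow> w \<in> F"
  shows "x \<squnion> z \<rightarrow> y \<squnion> w \<in> F"
  using filter_upward_closed[OF filter_mt_closed[OF assms(5,6)] _ mt_imp_le_imp_jn] assms by simp

abbreviation equiv_mod_filter :: "'a \<Rightarrow> 'a \<Rightarrow> bool" (infix \<open>\<approx>\<close> 50)
  where "x \<approx> y \<equiv> rho imp F x y"

lemma rho_refl: "x \<in> L \<Longrightarrow> x \<approx> x"
  unfolding rho_def by (simp add: imp_in_filter_if_le le_refl)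

lemma rho_sym: "x \<approx> y \<Longrightarrow> y \<approx> x"
  unfolding rho_def by blast

lemma rho_trans: "x \<in> L \<Longrightarrow> y \<in> L \<Longrightarrow> z \<in> L \<Longrightarrow> x \<approx> y \<Longrightarrow> y \<approx> z \<Longrightarrow> x \<approx> z"
  unfolding rho_def by (blast intro: imp_trans_in_filter)

lemma rho_if_le: "x \<in> L \<Longrightarrow> y \<in> L \<Longrightarrow> x \<sqsubseteq> y \<Longrightarrow> y \<rightarrow> x \<in> F \<Longrightarrow> x \<approx> y"
  unfolding rho_def by (simp add: imp_in_filter_if_le)

lemma rho_mt_cong: "x \<in> L \<Longrightarrow> y \<in> L \<Longrightarrow> z \<in> L \<Longrightarrow> w \<in> L \<Longrightarrow> x \<approx> y \<Longrightarrow> z \<approx> w \<Longrightarrow> x \<sqinter> z \<approx> y \<sqinter> w"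
  unfolding rho_def by (simp add: imp_mt_in_filter)

lemma rho_jn_cong: "x \<in> L \<Longrightarrow> y \<in> L \<Longrightarrow> z \<in> L \<Longrightarrow> w \<in> L \<Longrightarrow> x \<approx> y \<Longrightarrow> z \<approx> w \<Longrightarrow> x \<squnion> z \<approx> y \<squnion> w"
  unfolding rho_def by (simp add: imp_jn_in_filter)

lemma cls_eq_if_rho:
  assumes "x \<in> L" "y \<in> L" "x \<approx> y"
  shows "cls L imp F x = cls L imp F y"
proof -
  have "x \<approx> z \<longleftrightarrow> y \<approx> z" if "z \<in> L" for z
    using rho_trans[OF assms(2,1) that rho_sym[OF assms(3)]] rho_trans[OF assms(1,2) that assms(3)]
    by blast
  then show ?thesis unfolding cls_def by blast
qed

lemma some_in_cls: "x \<in> L \<Longrightarrow> (SOME a. a \<in> cls L imp F x) \<in> L \<and> x \<approx> (SOME a. a \<in> cls L imp F x)"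
  using someI[of "\<lambda>a. a \<in> cls L imp F x" x] rho_refl unfolding cls_def by blast

lemma qop_cls:
  assumes "\<And>x y. x \<in> L \<Longrightarrow> y \<in> L \<Longrightarrow> op x y \<in> L"
    and op_cong: "\<And>x y z w. x \<in> L \<Longrightarrow> y \<in> L \<Longrightarrow> z \<in> L \<Longrightarrow> w \<in> L \<Longrightarrow>
      x \<approx> y \<Longrightarrow> z \<approx> w \<Longrightarrow> op x z \<approx> op y w"
    and "x \<in> L" "y \<in> L"
  shows "qop L imp F op (cls L imp F x) (cls L imp F y) = cls L imp F (op x y)"
proof -
  define a b where "a = (SOME a. a \<in> cls L imp F x)" and "b = (SOME b. b \<in> cls L imp F y)"
  have a: "a \<in> L" "x \<approx> a" and b: "b \<in> L" "y \<approx> b"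
    using some_in_cls \<open>x \<in> L\<close> \<open>y \<in> L\<close> unfolding a_def b_def by blast+
  have "op a b \<approx> op x y"
    using op_cong[OF a(1) \<open>x \<in> L\<close> b(1) \<open>y \<in> L\<close> rho_sym[OF a(2)] rho_sym[OF b(2)]] .
  then have "cls L imp F (op a b) = cls L imp F (op x y)"
    using a b assms by (simp add: cls_eq_if_rho)
  then show ?thesis
    unfolding qop_def a_def b_def .
qed

lemma qop_mt_cls [simp]:
  "x \<in> L \<Longrightarrow> y \<in> L \<Longrightarrow> qop L imp F mt (cls L imp F x) (cls L imp F y) = cls L imp F (x \<sqinter> y)"
  by (simp add: qop_cls rho_mt_cong)

lemma qop_jn_cls [simp]:
  "x \<in> L \<Longrightarrow> y \<in> L \<Longrightarrow> qop L imp F jn (cls L imp F x) (cls L imp F y) = cls L imp F (x \<squnion> y)"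
  by (simp add: qop_cls rho_jn_cong)

end

locale distributive_il_filter = il_algebra +
  fixes F :: "'a set"
  assumes distributive_filter: "distributive_filter L jn mt imp mult e F"

sublocale distributive_il_filter \<subseteq> il_filter
  using distributive_filter unfolding distributive_filter_def by unfold_locales blast

context distributive_il_filter
begin

lemma jn_mt_distrib_rho:
  assumes "x \<in> L" "y \<in> L" "z \<in> L"
  shows "x \<squnion> (y \<sqinter> z) \<approx> (x \<squnion> y) \<sqinter> (x \<squnion> z)"
  using assms distributive_filter
  by (intro rho_if_le jn_mt_le_mt_jn) (auto simp: distributive_filter_def)

lemma mt_jn_distrib_rho:
  assumes "x \<in> L" "y \<in> L" "z \<in> L"
  shows "x \<sqinter> (y \<squnion> z) \<approx> (x \<sqinter> y) \<squnion> (x \<sqinter> z)"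
proof -
  let ?a = "x \<sqinter> y"
  have "?a \<squnion> x = x"
    using assms by (simp add: jn_commute jn_mt_absorb)
  then have 1: "?a \<squnion> (x \<sqinter> z) \<approx> x \<sqinter> (?a \<squnion> z)"
    using jn_mt_distrib_rho[of ?a x z] assms by simp
  have "z \<squnion> ?a \<approx> (z \<squnion> x) \<sqinter> (z \<squnion> y)"
    using jn_mt_distrib_rho assms by simp
  then have "x \<sqinter> (?a \<squnion> z) \<approx> x \<sqinter> ((x \<squnion> z) \<sqinter> (y \<squnion> z))"
    using rho_mt_cong[OF _ _ _ _ rho_refl] assms by (simp add: jn_commute)
  also have "x \<sqinter> ((x \<squnion> z) \<sqinter> (y \<squnion> z)) = x \<sqinter> (y \<squnion> z)"
    using assms by (simp flip: mt_assoc add: mt_jn_absorb)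
  finally have 2: "x \<sqinter> (?a \<squnion> z) \<approx> x \<sqinter> (y \<squnion> z)" .
  show ?thesis
    using rho_sym[OF rho_trans[OF _ _ _ 1 2]] assms by simp
qed

theorem quot_mt_jn_distrib:
  "\<forall>A\<in>quot L imp F. \<forall>B\<in>quot L imp F. \<forall>C\<in>quot L imp F.
     qop L imp F mt A (qop L imp F jn B C)
   = qop L imp F jn (qop L imp F mt A B) (qop L imp F mt A C)"
proof (intro ballI)
  fix A B C
  assume "A \<in> quot L imp F" "B \<in> quot L imp F" "C \<in> quot L imp F"
  then obtain x y z where xyz: "x \<in> L" "y \<in> L" "z \<in> L"
    and "A = cls L imp F x" "B = cls L imp F y" "C = cls L imp F z"
    unfolding quot_def by blast
  moreover have "cls L imp F (x \<sqinter> (y \<squnion> z)) = cls L imp F ((x \<sqinter> y) \<squnion> (x \<sqinter> z))"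
    using xyz by (simp add: cls_eq_if_rho mt_jn_distrib_rho)
  ultimately show "qop L imp F mt A (qop L imp F jn B C)
    = qop L imp F jn (qop L imp F mt A B) (qop L imp F mt A C)"
    by simp
qed

end

theorem mainTheorem8:
  assumes "IL_algebra L jn mt bt imp mult e"
    and "distributive_filter L jn mt imp mult e F"
  shows "\<forall>A\<in>quot L imp F. \<forall>B\<in>quot L imp F. \<forall>C\<in>quot L imp F.
           qop L imp F mt A (qop L imp F jn B C)
         = qop L imp F jn (qop L imp F mt A B) (qop L imp F mt A C)"
proof -
  interpret distributive_il_filter L jn mt bt imp mult e F
    using assms by unfold_locales
  show ?thesis by (rule quot_mt_jn_distrib)
qed

end
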